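(* (i) Let $f^n:\mathfrak{P} \times \Omega \to \mathbb{R}^d$, $n\in\mathbb N$, be $\mathcal B(\mathfrak P)\otimes\mathcal F$-measurable functions such that $\sup_{n \in \mathbb{N}} \Vert f^n(P,\cdot) \Vert_{L^2(P)}<\infty$ for all $P \in \mathfrak{P}$. Then there exist measurable functions $P\mapsto N_n^P \in \{n,n+1,\dots\}$ and $P\mapsto \lambda_i^{P,n}\in [0,1]$ satisfying $\sum_{i=n}^{N^P_n} \lambda_i^{P,n}=1$ and $\lambda^{P,n}_i=0$ for $i \notin \{n,\dots,N^P_n\}$ such that \[ (P,\omega)\mapsto g^{P,n}(\omega):= \sum_{i=n}^{N^P_n} \lambda^{P,n}_i\,f^{i}(P,\omega) \in \operatorname{conv}\{f^n(P,\omega),f^{n+1}(P,\omega),\dots\} \] is measurable and $(g^{P,n})_{n\in\mathbb{N}}$ converges in $L^2(P)$ for all $P\in\mathfrak{P}$. (ii) For each $m \in \mathbb{N}$, let $(f_m^n)_{n \in \mathbb{N}}$ be a sequence as in (i). Then there exist $N_n^P$ and $\lambda^{P,n}_i$ as in (i) (not depending on $m$) such that $(P,\omega)\mapsto g^{P,n}_m(\omega):= \sum_{i=n}^{N^P_n} \lambda^{P,n}_i\,f^i_m(P,\omega)$ is measurable and $(g^{P,n}_m)_{n\in\mathbb{N}}$ converges in $L^2(P)$ for all $P\in\mathfrak{P}$ and $m\in\mathbb{N}$. (iii) Let $f^n:\mathfrak{P} \times \Omega \to \mathbb{R}^d$ be measurable functions such that $\{f^n(P,\cdot)\}_{n\in\mathbb{N}}\subseteq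 L^1(P)$ is uniformly integrable for each $P\in\mathfrak{P}$. Then the assertion of (i) holds with convergence in $L^1(P)$ instead of $L^2(P)$.
   Context: $\Omega$ is a separable metric space with Borel $\sigma$-field $\mathcal{F}$; $\mathfrak{P}(\Omega)$ is the set of probability measures on $(\Omega,\mathcal F)$ with the Borel $\sigma$-field of weak convergence, and $\mathfrak{P}\subseteq\mathfrak{P}(\Omega)$ is a fixed measurable set. $\operatorname{conv}A$ denotes the convex hull of $A\subseteq\mathbb R^d$. *)

theory Defs
  imports "HOL-Probability.Probability"
begin

definition PM :: "('a::topological_space) measure set \<Rightarrow> 'a measure measure" where
  "PM Ps = restrict_space (prob_algebra (borel :: 'a measure)) Ps"

definition conv_weights ::
  "('a::topological_space) measure set \<Rightarrow> (nat \<Rightarrow> 'a measure \<Rightarrow> nat)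
     \<Rightarrow> (nat \<Rightarrow> nat \<Rightarrow> 'a measure \<Rightarrow> real) \<Rightarrow> bool" where
  "conv_weights Ps N lam \<longleftrightarrow>
     (\<forall>n. N n \<in> measurable (PM Ps) (count_space UNIV)) \<and>
     (\<forall>n i. lam n i \<in> borel_measurable (PM Ps)) \<and>
     (\<forall>n. \<forall>P\<in>Ps. n \<le> N n P \<and> (\<forall>i. 0 \<le> lam n i P \<and> lam n i P \<le> 1) \<and>
        (\<Sum>i=n..N n P. lam n i P) = 1 \<and> (\<forall>i. i \<notin> {n..N n P} \<longrightarrow> lam n i P = 0))"

definition conv_comb ::
  "(nat \<Rightarrow> 'm \<Rightarrow> nat) \<Rightarrow> (nat \<Rightarrow> nat \<Rightarrow> 'm \<Rightarrow> real) \<Rightarrow> (nat \<Rightarrow> 'm \<Rightarrow> 'a \<Rightarrow> 'b::real_vector)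
     \<Rightarrow> nat \<Rightarrow> 'm \<Rightarrow> 'a \<Rightarrow> 'b" where
  "conv_comb N lam f n P \<omega> = (\<Sum>i=n..N n P. lam n i P *\<^sub>R f i P \<omega>)"

definition Lp_convergent :: "real \<Rightarrow> 'a measure \<Rightarrow> (nat \<Rightarrow> 'a \<Rightarrow> 'b::real_normed_vector) \<Rightarrow> bool" where
  "Lp_convergent p P g \<longleftrightarrow>
     (\<exists>h \<in> borel_measurable P. (\<integral>\<^sup>+\<omega>. ennreal (norm (h \<omega>) powr p) \<partial>P) < \<infinity> \<and>
        (\<lambda>n. \<integral>\<^sup>+\<omega>. ennreal (norm (g n \<omega> - h \<omega>) powr p) \<partial>P) \<longlonglongrightarrow> 0)"

definition unif_integrable :: "'a measure \<Rightarrow> (nat \<Rightarrow> 'a \<Rightarrow> 'b::{banach, second_countable_topology}) \<Rightarrow> bool" where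
  "unif_integrable P F \<longleftrightarrow> (\<forall>n. integrable P (F n)) \<and>
     ((\<lambda>K::real. SUP n. \<integral>\<^sup>+\<omega>. indicator {x. K < norm (F n x)} \<omega> * ennreal (norm (F n \<omega>)) \<partial>P)
        \<longlongrightarrow> 0) at_top"

end

theory Submission
  imports Defs "HOL-Library.More_List"
begin

text \<open>Fix \<open>P\<close>. For a finite convex combination \<open>\<lambda>\<close> of a tail \<open>f_m^n, f_m^(n+1), ...\<close> consider the energy
  \<open>\<Psi>(\<lambda>) = \<Sum>_m c_m \<parallel>\<Sum>_i \<lambda>_i f_m^i\<parallel>\<^sup>2\<close> (norms in \<open>L\<^sup>2(P)\<close>), where
  \<open>c_m = 2^-m / (1 + sup_n \<parallel>f_m^n\<parallel>\<^sup>2)\<close> makes \<open>\<Psi> \<le> 2\<close>. Its infimum \<open>A_n\<close> over combinations of the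
  \<open>n\<close>-th tail increases with \<open>n\<close>, hence converges. If \<open>\<lambda>\<close> and \<open>\<mu>\<close> are near-minimizers at levels \<open>k\<close>
  and \<open>l\<close>, their midpoint is admissible at level \<open>min k l\<close>, so the parallelogram law gives
  \<open>c_m \<parallel>g_\<lambda> - g_\<mu>\<parallel>\<^sup>2 / 4 \<le> (\<Psi>(\<lambda>) + \<Psi>(\<mu>)) / 2 - A_(min k l)\<close> for every \<open>m\<close>; the right-hand side
  tends to zero, so near-minimizers are \<open>L\<^sup>2\<close>-Cauchy for all \<open>m\<close> at once. Restricting to rational
  weights and selecting the first near-minimizer in an enumeration keeps every choice measurable
  in \<open>P\<close>. Part (i) is the case of a constant family. For (iii), apply (ii) to the truncations
  \<open>f^n 1{|f^n| \<le> m}\<close>: uniform integrability makes the truncation error small in \<open>L\<^sup>1\<close> uniformly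
  in \<open>n\<close>, and on a probability space \<open>L\<^sup>2\<close>-Cauchy sequences are \<open>L\<^sup>1\<close>-Cauchy.\<close>

section \<open>Cauchy sequences in \<open>L\<^sup>p\<close>\<close>

definition Lp_cauchy :: "real \<Rightarrow> 'a measure \<Rightarrow> (nat \<Rightarrow> 'a \<Rightarrow> 'b::real_normed_vector) \<Rightarrow> bool" where
  "Lp_cauchy p M g \<longleftrightarrow> (\<forall>e>0. \<exists>N. \<forall>m\<ge>N. \<forall>n\<ge>N.
     (\<integral>\<^sup>+x. ennreal (norm (g m x - g n x) powr p) \<partial>M) < ennreal e)"

lemma ennreal_LIMSEQ_0I:
  fixes X :: "nat \<Rightarrow> ennreal"
  assumes "\<And>e. e > 0 \<Longrightarrow> eventually (\<lambda>n. X n \<le> ennreal e) sequentially"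
  shows "X \<longlonglongrightarrow> 0"
proof (rule order_tendstoI)
  fix a :: ennreal assume "0 < a"
  then obtain b where b: "0 < b" "b < a" using dense by blast
  have "b < \<top>" using b(2) top_greatest by (rule order_less_le_trans)
  with b have "0 < enn2real b" "ennreal (enn2real b) < a" by (auto simp: enn2real_positive_iff)
  then show "eventually (\<lambda>n. X n < a) sequentially"
    using assms[of "enn2real b"] by (auto elim: eventually_mono)
qed simp

lemma norm_add_powr_le:
  fixes a b :: "'b::real_normed_vector"
  assumes "p > 0"
  shows "norm (a + b) powr p \<le> 2 powr p * (norm a powr p + norm b powr p)"
proof -
  have "norm (a + b) powr p \<le> (2 * max (norm a) (norm b)) powr p"
    using norm_triangle_ineq[of a b] assms by (intro powr_mono2) auto
  also have "\<dots> = 2 powr p * max (norm a) (norm b) powr p"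
    by (simp add: powr_mult)
  also have "\<dots> \<le> 2 powr p * (norm a powr p + norm b powr p)"
    by (intro mult_left_mono) (auto simp: max_def)
  finally show ?thesis .
qed

lemma nn_integral_norm_add_powr_le:
  fixes u v :: "'a \<Rightarrow> 'b::real_normed_vector"
  assumes "p > 0" and [measurable]: "u \<in> borel_measurable M" "v \<in> borel_measurable M"
  shows "(\<integral>\<^sup>+x. ennreal (norm (u x + v x) powr p) \<partial>M)
    \<le> ennreal (2 powr p) * ((\<integral>\<^sup>+x. ennreal (norm (u x) powr p) \<partial>M) + (\<integral>\<^sup>+x. ennreal (norm (v x) powr p) \<partial>M))"
proof -
  have "(\<integral>\<^sup>+x. ennreal (norm (u x + v x) powr p) \<partial>M)
      \<le> (\<integral>\<^sup>+x. ennreal (2 powr p) * (ennreal (norm (u x) powr p) + ennreal (norm (v x) powr p)) \<partial>M)"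
    using norm_add_powr_le[OF assms(1)]
    by (intro nn_integral_mono) (simp add: ennreal_mult[symmetric] ennreal_plus[symmetric] ennreal_leI del: ennreal_plus)
  also have "\<dots> = ennreal (2 powr p) * ((\<integral>\<^sup>+x. ennreal (norm (u x) powr p) \<partial>M) + (\<integral>\<^sup>+x. ennreal (norm (v x) powr p) \<partial>M))"
    by (simp add: nn_integral_cmult nn_integral_add)
  finally show ?thesis .
qed

lemma Lp_convergent_imp_Lp_cauchy:
  fixes g :: "nat \<Rightarrow> 'a \<Rightarrow> 'b::{real_normed_vector, second_countable_topology}"
  assumes p: "p > 0" and meas: "\<And>n. g n \<in> borel_measurable M" and conv: "Lp_convergent p M g"
  shows "Lp_cauchy p M g"
  unfolding Lp_cauchy_def
proof (intro allI impI)
  fix e :: real assume e: "e > 0"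
  obtain h where [measurable]: "h \<in> borel_measurable M"
    and lim: "(\<lambda>n. \<integral>\<^sup>+x. ennreal (norm (g n x - h x) powr p) \<partial>M) \<longlonglongrightarrow> 0"
    using conv unfolding Lp_convergent_def by blast
  note meas[measurable]
  define \<delta> where "\<delta> = e / (4 * 2 powr p)"
  have \<delta>: "\<delta> > 0" using e by (simp add: \<delta>_def)
  obtain N where N: "\<And>n. n \<ge> N \<Longrightarrow> (\<integral>\<^sup>+x. ennreal (norm (g n x - h x) powr p) \<partial>M) < ennreal \<delta>"
    using order_tendstoD(2)[OF lim, of "ennreal \<delta>"] \<delta> by (auto simp: eventually_sequentially)
  show "\<exists>N. \<forall>m\<ge>N. \<forall>n\<ge>N. (\<integral>\<^sup>+x. ennreal (norm (g m x - g n x) powr p) \<partial>M) < ennreal e"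
  proof (intro exI allI impI)
    fix m n assume mn: "N \<le> m" "N \<le> n"
    have "(\<integral>\<^sup>+x. ennreal (norm (g m x - g n x) powr p) \<partial>M)
        = (\<integral>\<^sup>+x. ennreal (norm ((g m x - h x) + - (g n x - h x)) powr p) \<partial>M)"
      by simp
    also have "\<dots> \<le> ennreal (2 powr p) * ((\<integral>\<^sup>+x. ennreal (norm (g m x - h x) powr p) \<partial>M)
        + (\<integral>\<^sup>+x. ennreal (norm (- (g n x - h x)) powr p) \<partial>M))"
      by (rule nn_integral_norm_add_powr_le[OF p]) measurable
    also have "\<dots> \<le> ennreal (2 powr p) * (ennreal \<delta> + ennreal \<delta>)"
      using N[OF mn(1)] N[OF mn(2)] by (intro mult_left_mono add_mono) (auto simp: norm_minus_commute)
    also have "\<dots> = ennreal (e / 2)"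
      using \<delta> by (simp add: \<delta>_def ennreal_mult[symmetric] ennreal_plus[symmetric] del: ennreal_plus)
    also have "\<dots> < ennreal e" using e by (intro ennreal_lessI) auto
    finally show "(\<integral>\<^sup>+x. ennreal (norm (g m x - g n x) powr p) \<partial>M) < ennreal e" .
  qed
qed

lemma Lp_cauchy_subseq:
  assumes cau: "Lp_cauchy p M g" and e: "\<And>k. e k > 0"
  obtains r where "strict_mono r"
    "\<And>k. (\<integral>\<^sup>+x. ennreal (norm (g (r (Suc k)) x - g (r k) x) powr p) \<partial>M) < ennreal (e k)"
proof -
  define D where "D i j = (\<integral>\<^sup>+x. ennreal (norm (g i x - g j x) powr p) \<partial>M)" for i j
  have "\<exists>r. \<forall>k. (\<forall>i\<ge>r k. \<forall>j\<ge>r k. D i j < ennreal (e k)) \<and> r k < r (Suc k)"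
  proof (rule dependent_nat_choice)
    show "\<exists>N. \<forall>i\<ge>N. \<forall>j\<ge>N. D i j < ennreal (e 0)"
      using cau e unfolding Lp_cauchy_def D_def by blast
  next
    fix N k
    obtain N' where "\<forall>i\<ge>N'. \<forall>j\<ge>N'. D i j < ennreal (e (Suc k))"
      using cau e unfolding Lp_cauchy_def D_def by blast
    then show "\<exists>N''. (\<forall>i\<ge>N''. \<forall>j\<ge>N''. D i j < ennreal (e (Suc k))) \<and> N < N''"
      by (intro exI[of _ "max N' (Suc N)"]) auto
  qed
  then obtain r where r: "\<And>k. \<forall>i\<ge>r k. \<forall>j\<ge>r k. D i j < ennreal (e k)" "\<And>k. r k < r (Suc k)"
    by blast
  show ?thesis
  proof (rule that)
    show "strict_mono r" using r(2) by (rule strict_monoI_Suc)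
    show "(\<integral>\<^sup>+x. ennreal (norm (g (r (Suc k)) x - g (r k) x) powr p) \<partial>M) < ennreal (e k)" for k
      using r(1)[of k] r(2)[of k] by (simp add: D_def)
  qed
qed

lemma AE_convergent_if_fast_Lp_cauchy:
  fixes g :: "nat \<Rightarrow> 'a \<Rightarrow> 'b::{banach, second_countable_topology}"
  assumes p: "p > 0" and [measurable]: "\<And>k. g k \<in> borel_measurable M"
    and fast: "\<And>k. (\<integral>\<^sup>+x. ennreal (norm (g (Suc k) x - g k x) powr p) \<partial>M)
                  \<le> ennreal ((1/2)^k * ((1/2)^k) powr p)"
  shows "AE x in M. convergent (\<lambda>k. g k x)"
proof -
  define A where "A k = {x\<in>space M. (1/2)^k < norm (g (Suc k) x - g k x)}" for k
  have A_sets[measurable]: "A k \<in> sets M" for k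
    unfolding A_def by measurable
  have A_le: "emeasure M (A k) \<le> ennreal ((1/2)^k)" for k
  proof -
    define c where "c = ((1/2::real)^k) powr p"
    have c: "c > 0" by (simp add: c_def)
    have "indicator (A k) x \<le> ennreal (1/c) * ennreal (norm (g (Suc k) x - g k x) powr p)" for x
    proof (cases "x \<in> A k")
      case True
      then have "c \<le> norm (g (Suc k) x - g k x) powr p"
        unfolding c_def A_def using p by (intro powr_mono2) auto
      then show ?thesis
        using True c by (simp add: ennreal_mult[symmetric] field_simps flip: ennreal_1)
    qed simp
    then have "emeasure M (A k) \<le> (\<integral>\<^sup>+x. ennreal (1/c) * ennreal (norm (g (Suc k) x - g k x) powr p) \<partial>M)"
      by (simp add: nn_integral_indicator[symmetric] nn_integral_mono del: nn_integral_indicator)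
    also have "\<dots> = ennreal (1/c) * (\<integral>\<^sup>+x. ennreal (norm (g (Suc k) x - g k x) powr p) \<partial>M)"
      by (rule nn_integral_cmult) measurable
    also have "\<dots> \<le> ennreal (1/c) * ennreal ((1/2)^k * c)"
      using fast[of k] by (intro mult_left_mono) (auto simp: c_def)
    also have "\<dots> = ennreal ((1/2)^k)"
      using c by (simp add: ennreal_mult[symmetric])
    finally show ?thesis .
  qed
  have A_fin: "emeasure M (A k) < \<infinity>" for k
    using A_le[of k] by (simp add: le_less_trans)
  have "summable (\<lambda>k. measure M (A k))"
  proof (rule summable_comparison_test'[OF summable_geometric[of "1/2::real"]])
    show "norm (measure M (A k)) \<le> (1/2)^k" for k
      using A_le[of k] A_fin[of k] by (simp add: emeasure_eq_ennreal_measure)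
  qed simp
  with A_fin have "AE x in M. eventually (\<lambda>k. x \<in> space M - A k) sequentially"
    by (intro borel_cantelli_AE1) auto
  then show ?thesis
  proof eventually_elim
    case (elim x)
    then have "eventually (\<lambda>k. norm (g (Suc k) x - g k x) \<le> (1/2)^k) sequentially"
      by eventually_elim (auto simp: A_def not_less)
    then have "summable (\<lambda>k. g (Suc k) x - g k x)"
      by (intro summable_comparison_test_ev[OF _ summable_geometric[of "1/2::real"]]) auto
    then have "(\<lambda>n. g 0 x + (\<Sum>k<n. g (Suc k) x - g k x)) \<longlonglongrightarrow> g 0 x + (\<Sum>k. g (Suc k) x - g k x)"
      by (intro tendsto_add tendsto_const summable_LIMSEQ)
    then show ?case
      using sum_lessThan_telescope[of "\<lambda>k. g k x"] by (auto simp: convergent_def)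
  qed
qed

lemma nn_integral_powr_norm_diff_AE_limit_le:
  fixes s :: "nat \<Rightarrow> 'a \<Rightarrow> 'b::{real_normed_vector, second_countable_topology}"
  assumes p: "p > 0" and [measurable]: "u \<in> borel_measurable M" "\<And>k. s k \<in> borel_measurable M"
    and lim: "AE x in M. (\<lambda>k. s k x) \<longlonglongrightarrow> h x"
    and bound: "eventually (\<lambda>k. (\<integral>\<^sup>+x. ennreal (norm (u x - s k x) powr p) \<partial>M) \<le> c) sequentially"
  shows "(\<integral>\<^sup>+x. ennreal (norm (u x - h x) powr p) \<partial>M) \<le> c"
proof -
  have "(\<integral>\<^sup>+x. ennreal (norm (u x - h x) powr p) \<partial>M)
      = (\<integral>\<^sup>+x. liminf (\<lambda>k. ennreal (norm (u x - s k x) powr p)) \<partial>M)"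
  proof (rule nn_integral_cong_AE)
    show "AE x in M. ennreal (norm (u x - h x) powr p) = liminf (\<lambda>k. ennreal (norm (u x - s k x) powr p))"
      using lim
    proof eventually_elim
      case (elim x)
      then have "(\<lambda>k. ennreal (norm (u x - s k x) powr p)) \<longlonglongrightarrow> ennreal (norm (u x - h x) powr p)"
        using p by (intro tendsto_intros) auto
      then show ?case by (rule lim_imp_Liminf[OF sequentially_bot, symmetric])
    qed
  qed
  also have "\<dots> \<le> liminf (\<lambda>k. \<integral>\<^sup>+x. ennreal (norm (u x - s k x) powr p) \<partial>M)"
    by (intro nn_integral_liminf) measurable
  also have "\<dots> \<le> limsup (\<lambda>k. \<integral>\<^sup>+x. ennreal (norm (u x - s k x) powr p) \<partial>M)"
    by (rule Liminf_le_Limsup) simp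
  also have "\<dots> \<le> c"
    using bound by (rule Limsup_bounded)
  finally show ?thesis .
qed

lemma Lp_cauchy_imp_Lp_convergent:
  fixes g :: "nat \<Rightarrow> 'a \<Rightarrow> 'b::{banach, second_countable_topology}"
  assumes p: "p > 0" and meas[measurable]: "\<And>n. g n \<in> borel_measurable M"
    and fin: "\<And>n. (\<integral>\<^sup>+x. ennreal (norm (g n x) powr p) \<partial>M) < \<infinity>"
    and cau: "Lp_cauchy p M g"
  shows "Lp_convergent p M g"
proof -
  obtain r where r: "strict_mono r"
    "\<And>k. (\<integral>\<^sup>+x. ennreal (norm (g (r (Suc k)) x - g (r k) x) powr p) \<partial>M)
        < ennreal ((1/2)^k * ((1/2)^k) powr p)"
    using Lp_cauchy_subseq[OF cau, of "\<lambda>k. (1/2)^k * ((1/2)^k) powr p"] by auto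
  have "AE x in M. convergent (\<lambda>k. g (r k) x)"
    using r(2) by (intro AE_convergent_if_fast_Lp_cauchy[OF p] less_imp_le) auto
  define h where "h x = lim (\<lambda>k. g (r k) x)" for x
  have h_meas[measurable]: "h \<in> borel_measurable M"
    unfolding h_def by measurable
  have lim: "AE x in M. (\<lambda>k. g (r k) x) \<longlonglongrightarrow> h x"
    using \<open>AE x in M. convergent (\<lambda>k. g (r k) x)\<close> by eventually_elim (simp add: h_def convergent_LIMSEQ_iff)
  have close: "(\<integral>\<^sup>+x. ennreal (norm (g n x - h x) powr p) \<partial>M) \<le> ennreal e"
    if N: "\<forall>m\<ge>N. \<forall>n\<ge>N. (\<integral>\<^sup>+x. ennreal (norm (g m x - g n x) powr p) \<partial>M) < ennreal e"
    and "N \<le> n" for n N e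
  proof (rule nn_integral_powr_norm_diff_AE_limit_le[OF p _ _ lim])
    have "eventually (\<lambda>k. N \<le> r k) sequentially"
      using eventually_ge_at_top[of N] by eventually_elim (meson order_trans seq_suble[OF r(1)])
    then show "eventually (\<lambda>k. (\<integral>\<^sup>+x. ennreal (norm (g n x - g (r k) x) powr p) \<partial>M) \<le> ennreal e) sequentially"
      by eventually_elim (simp add: N \<open>N \<le> n\<close> less_imp_le)
  qed measurable
  have "(\<lambda>n. \<integral>\<^sup>+x. ennreal (norm (g n x - h x) powr p) \<partial>M) \<longlonglongrightarrow> 0"
  proof (rule ennreal_LIMSEQ_0I)
    fix e :: real assume "e > 0"
    with cau obtain N where N: "\<forall>m\<ge>N. \<forall>n\<ge>N. (\<integral>\<^sup>+x. ennreal (norm (g m x - g n x) powr p) \<partial>M) < ennreal e"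
      unfolding Lp_cauchy_def by blast
    show "eventually (\<lambda>n. (\<integral>\<^sup>+x. ennreal (norm (g n x - h x) powr p) \<partial>M) \<le> ennreal e) sequentially"
      unfolding eventually_sequentially using close[OF N] by blast
  qed
  moreover have "(\<integral>\<^sup>+x. ennreal (norm (h x) powr p) \<partial>M) < \<infinity>"
  proof -
    obtain N where "\<forall>m\<ge>N. \<forall>n\<ge>N. (\<integral>\<^sup>+x. ennreal (norm (g m x - g n x) powr p) \<partial>M) < ennreal 1"
      using cau[unfolded Lp_cauchy_def, rule_format, of 1] by auto
    then have hN: "(\<integral>\<^sup>+x. ennreal (norm (g N x - h x) powr p) \<partial>M) \<le> ennreal 1"
      by (rule close) simp
    have "(\<integral>\<^sup>+x. ennreal (norm (h x) powr p) \<partial>M)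
        = (\<integral>\<^sup>+x. ennreal (norm (- (g N x - h x) + g N x) powr p) \<partial>M)"
      by simp
    also have "\<dots> \<le> ennreal (2 powr p) * ((\<integral>\<^sup>+x. ennreal (norm (- (g N x - h x)) powr p) \<partial>M)
        + (\<integral>\<^sup>+x. ennreal (norm (g N x) powr p) \<partial>M))"
      by (rule nn_integral_norm_add_powr_le[OF p]) measurable
    also have "\<dots> < \<infinity>"
      using order_le_less_trans[OF hN ennreal_less_top] fin[of N]
      by (simp add: ennreal_mult_less_top norm_minus_commute)
    finally show ?thesis .
  qed
  ultimately show ?thesis
    unfolding Lp_convergent_def using h_meas by blast
qed

lemma nn_integral_norm_le_L2:
  fixes u :: "'a \<Rightarrow> 'b::real_normed_vector"
  assumes P: "prob_space P" and [measurable]: "u \<in> borel_measurable P" and \<delta>: "\<delta> > 0"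
  shows "(\<integral>\<^sup>+x. ennreal (norm (u x)) \<partial>P)
    \<le> ennreal \<delta> + ennreal (1/\<delta>) * (\<integral>\<^sup>+x. ennreal (norm (u x) powr 2) \<partial>P)"
proof -
  have "norm (u x) \<le> \<delta> + 1/\<delta> * (norm (u x))\<^sup>2" for x
  proof (cases "norm (u x) \<le> \<delta>")
    case False
    then have "norm (u x) * \<delta> \<le> norm (u x) * norm (u x)" by (intro mult_left_mono) auto
    then show ?thesis using \<delta> by (simp add: field_simps power2_eq_square add_increasing)
  qed (use \<delta> in \<open>simp add: add_increasing2\<close>)
  then have "(\<integral>\<^sup>+x. ennreal (norm (u x)) \<partial>P)
      \<le> (\<integral>\<^sup>+x. ennreal \<delta> + ennreal (1/\<delta>) * ennreal (norm (u x) powr 2) \<partial>P)"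
    using \<delta> by (intro nn_integral_mono) (simp add: powr_numeral ennreal_mult[symmetric] flip: ennreal_plus)
  also have "\<dots> = ennreal \<delta> + ennreal (1/\<delta>) * (\<integral>\<^sup>+x. ennreal (norm (u x) powr 2) \<partial>P)"
    using P by (simp add: nn_integral_add nn_integral_cmult prob_space.emeasure_space_1)
  finally show ?thesis .
qed

lemma Lp_cauchy_1_if_L2_approximable:
  fixes g :: "nat \<Rightarrow> 'a \<Rightarrow> 'b::{real_normed_vector, second_countable_topology}"
    and h :: "nat \<Rightarrow> nat \<Rightarrow> 'a \<Rightarrow> 'b"
  assumes P: "prob_space P"
    and [measurable]: "\<And>n. g n \<in> borel_measurable P" "\<And>m n. h m n \<in> borel_measurable P"
    and approx: "\<And>e. e > 0 \<Longrightarrow> \<exists>m. \<forall>n. (\<integral>\<^sup>+x. ennreal (norm (g n x - h m n x)) \<partial>P) \<le> ennreal e"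
    and cauchy: "\<And>m. Lp_cauchy 2 P (h m)"
  shows "Lp_cauchy 1 P g"
  unfolding Lp_cauchy_def
proof (intro allI impI)
  fix e :: real assume e: "e > 0"
  obtain m where m: "\<And>n. (\<integral>\<^sup>+x. ennreal (norm (g n x - h m n x)) \<partial>P) \<le> ennreal (e/4)"
    using approx[of "e/4"] e by auto
  obtain N where N: "\<And>k l. N \<le> k \<Longrightarrow> N \<le> l \<Longrightarrow>
      (\<integral>\<^sup>+x. ennreal (norm (h m k x - h m l x) powr 2) \<partial>P) < ennreal ((e/8)\<^sup>2)"
    using cauchy[of m, unfolded Lp_cauchy_def, rule_format, of "(e/8)\<^sup>2"] e by auto
  show "\<exists>N. \<forall>k\<ge>N. \<forall>l\<ge>N. (\<integral>\<^sup>+x. ennreal (norm (g k x - g l x) powr 1) \<partial>P) < ennreal e"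
  proof (intro exI allI impI)
    fix k l assume kl: "N \<le> k" "N \<le> l"
    have middle: "(\<integral>\<^sup>+x. ennreal (norm (h m k x - h m l x)) \<partial>P) \<le> ennreal (e/4)"
    proof -
      have "(\<integral>\<^sup>+x. ennreal (norm (h m k x - h m l x)) \<partial>P)
          \<le> ennreal (e/8) + ennreal (1/(e/8)) * (\<integral>\<^sup>+x. ennreal (norm (h m k x - h m l x) powr 2) \<partial>P)"
        using e by (intro nn_integral_norm_le_L2[OF P]) auto
      also have "\<dots> \<le> ennreal (e/8) + ennreal (1/(e/8)) * ennreal ((e/8)\<^sup>2)"
        using N[OF kl] by (intro add_left_mono mult_left_mono) auto
      also have "\<dots> = ennreal (e/4)"
        using e by (simp add: power2_eq_square ennreal_mult[symmetric] flip: ennreal_plus)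
      finally show ?thesis .
    qed
    have "(\<integral>\<^sup>+x. ennreal (norm (g k x - g l x) powr 1) \<partial>P)
        \<le> (\<integral>\<^sup>+x. ennreal (norm (g k x - h m k x)) + ennreal (norm (h m k x - h m l x))
            + ennreal (norm (g l x - h m l x)) \<partial>P)"
    proof (rule nn_integral_mono)
      fix x
      have "norm (g k x - g l x) \<le> norm (g k x - h m k x) + norm (h m k x - h m l x) + norm (g l x - h m l x)"
        using norm_triangle_ineq[of "g k x - h m k x" "(h m k x - h m l x) - (g l x - h m l x)"]
          norm_triangle_ineq4[of "h m k x - h m l x" "g l x - h m l x"]
        by simp
      then show "ennreal (norm (g k x - g l x) powr 1) \<le> ennreal (norm (g k x - h m k x))
          + ennreal (norm (h m k x - h m l x)) + ennreal (norm (g l x - h m l x))"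
        by (simp add: ennreal_leI flip: ennreal_plus)
    qed
    also have "\<dots> = (\<integral>\<^sup>+x. ennreal (norm (g k x - h m k x)) \<partial>P) + (\<integral>\<^sup>+x. ennreal (norm (h m k x - h m l x)) \<partial>P)
        + (\<integral>\<^sup>+x. ennreal (norm (g l x - h m l x)) \<partial>P)"
      by (simp add: nn_integral_add)
    also have "\<dots> \<le> ennreal (e/4) + ennreal (e/4) + ennreal (e/4)"
      using m[of k] m[of l] middle by (intro add_mono) auto
    also have "\<dots> < ennreal e"
      using e by (simp add: ennreal_lessI flip: ennreal_plus)
    finally show "(\<integral>\<^sup>+x. ennreal (norm (g k x - g l x) powr 1) \<partial>P) < ennreal e" .
  qed
qed


section \<open>Rational convex weights\<close>

definition qweight :: "rat list \<Rightarrow> nat \<Rightarrow> real" where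
  "qweight xs i = of_rat (nth_default 0 xs i)"

definition qconvex :: "nat \<Rightarrow> rat list \<Rightarrow> bool" where
  "qconvex n xs \<longleftrightarrow> n < length xs \<and> (\<forall>x\<in>set xs. 0 \<le> x) \<and> sum_list xs = 1 \<and> (\<forall>i<n. xs ! i = 0)"

definition qcomb :: "rat list \<Rightarrow> (nat \<Rightarrow> 'b::real_vector) \<Rightarrow> 'b" where
  "qcomb xs v = (\<Sum>i<length xs. qweight xs i *\<^sub>R v i)"

definition qmid :: "rat list \<Rightarrow> rat list \<Rightarrow> rat list" where
  "qmid xs ys = map (\<lambda>i. (nth_default 0 xs i + nth_default 0 ys i) / 2) [0..<max (length xs) (length ys)]"

lemma sum_nth_default:
  assumes "length xs \<le> L"
  shows "(\<Sum>i<L. nth_default 0 xs i) = sum_list xs"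
proof -
  have "(\<Sum>i<L. nth_default 0 xs i) = (\<Sum>i<length xs. nth_default 0 xs i)"
    using assms by (intro sum.mono_neutral_right) (auto simp: nth_default_def)
  also have "\<dots> = (\<Sum>i<length xs. xs ! i)"
    by (simp add: nth_default_def)
  finally show ?thesis by (simp add: sum_list_sum_nth atLeast0LessThan)
qed

lemma qweight_nonneg: "qconvex n xs \<Longrightarrow> 0 \<le> qweight xs i"
  by (auto simp: qconvex_def qweight_def nth_default_def)

lemma qweight_eq_0: "qconvex n xs \<Longrightarrow> i < n \<or> length xs \<le> i \<Longrightarrow> qweight xs i = 0"
  by (auto simp: qconvex_def qweight_def nth_default_def)

lemma sum_qweight: "qconvex n xs \<Longrightarrow> (\<Sum>i<length xs. qweight xs i) = 1"
  by (simp add: qweight_def qconvex_def sum_nth_default flip: of_rat_sum)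

lemma qweight_le_1:
  assumes "qconvex n xs"
  shows "qweight xs i \<le> 1"
proof (cases "i < length xs")
  case True
  then have "qweight xs i \<le> (\<Sum>j<length xs. qweight xs j)"
    using qweight_nonneg[OF assms] by (intro member_le_sum) auto
  then show ?thesis by (simp add: sum_qweight[OF assms])
qed (simp add: qweight_eq_0[OF assms])

lemma qcomb_eq_sum:
  "finite S \<Longrightarrow> {..<length xs} \<subseteq> S \<Longrightarrow> qcomb xs v = (\<Sum>i\<in>S. qweight xs i *\<^sub>R v i)"
  unfolding qcomb_def by (intro sum.mono_neutral_left) (auto simp: qweight_def nth_default_def)

lemma qweight_qmid: "qweight (qmid xs ys) i = (qweight xs i + qweight ys i) / 2"
  by (auto simp: qweight_def qmid_def nth_default_def of_rat_add of_rat_divide)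

lemma qconvex_qmid:
  assumes "qconvex k xs" "qconvex l ys"
  shows "qconvex (min k l) (qmid xs ys)"
proof -
  have "sum_list (qmid xs ys) = (\<Sum>i<max (length xs) (length ys). (nth_default 0 xs i + nth_default 0 ys i) / 2)"
    by (simp add: qmid_def sum_list_sum_nth atLeast0LessThan)
  also have "\<dots> = (sum_list xs + sum_list ys) / 2"
    by (simp add: sum.distrib sum_nth_default flip: sum_divide_distrib)
  finally show ?thesis
    using assms by (auto simp: qconvex_def qmid_def nth_default_def)
qed

lemma qcomb_qmid: "qcomb (qmid xs ys) v = (1/2) *\<^sub>R (qcomb xs v + qcomb ys v)"
proof -
  define S where "S = {..<max (length xs) (length ys)}"
  have S: "{..<length (qmid xs ys)} \<subseteq> S" "{..<length xs} \<subseteq> S" "{..<length ys} \<subseteq> S"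
    by (auto simp: S_def qmid_def)
  have "qcomb (qmid xs ys) v = (\<Sum>i\<in>S. (1/2) *\<^sub>R (qweight xs i *\<^sub>R v i) + (1/2) *\<^sub>R (qweight ys i *\<^sub>R v i))"
    by (simp add: qcomb_eq_sum[OF _ S(1)] qweight_qmid add_divide_distrib scaleR_add_left S_def)
  also have "\<dots> = (1/2) *\<^sub>R (qcomb xs v + qcomb ys v)"
    by (simp add: sum.distrib scaleR_add_right scaleR_sum_right qcomb_eq_sum[OF _ S(2)] qcomb_eq_sum[OF _ S(3)] S_def)
  finally show ?thesis .
qed

lemma norm_qcomb_sq_le:
  assumes "qconvex n xs"
  shows "(norm (qcomb xs v))\<^sup>2 \<le> (\<Sum>i<length xs. qweight xs i * (norm (v i))\<^sup>2)"
proof -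
  have "norm (qcomb xs v) \<le> (\<Sum>i<length xs. qweight xs i * norm (v i))"
    unfolding qcomb_def using qweight_nonneg[OF assms]
    by (intro order_trans[OF norm_sum]) (simp add: abs_of_nonneg)
  then have "(norm (qcomb xs v))\<^sup>2 \<le> (\<Sum>i<length xs. qweight xs i * norm (v i))\<^sup>2"
    by (intro power_mono) auto
  also have "\<dots> \<le> (\<Sum>i<length xs. qweight xs i * (norm (v i))\<^sup>2)"
    using assms qweight_nonneg[OF assms] sum_qweight[OF assms]
    by (intro convex_on_sum[OF _ _ convex_power2, simplified]) (auto simp: qconvex_def)
  finally show ?thesis .
qed

lemma qconvex_unit: "qconvex n (replicate n 0 @ [1])"
  by (auto simp: qconvex_def nth_append sum_list_replicate)

section \<open>Measurability in the parameter \<open>P\<close>\<close>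

lemma space_PM: "Ps \<in> sets (prob_algebra borel) \<Longrightarrow> space (PM Ps) = Ps"
  unfolding PM_def using sets.sets_into_space by (auto simp: space_restrict_space)

lemma
  assumes "Ps \<in> sets (prob_algebra (borel :: 'a::topological_space measure))" "P \<in> Ps"
  shows prob_space_PM: "prob_space P" and sets_PM: "sets P = sets (borel :: 'a measure)"
proof -
  have "P \<in> space (prob_algebra (borel :: 'a measure))"
    using assms sets.sets_into_space by blast
  then show "prob_space P" "sets P = sets (borel :: 'a measure)"
    by (auto simp: space_prob_algebra)
qed

lemma nn_integral_measurable_PM:
  assumes "(\<lambda>(P, \<omega>). F P \<omega>) \<in> borel_measurable (PM Ps \<Otimes>\<^sub>M borel)"
  shows "(\<lambda>P. \<integral>\<^sup>+\<omega>. F P \<omega> \<partial>P) \<in> borel_measurable (PM Ps)"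
proof (rule nn_integral_measurable_subprob_algebra2[OF assms])
  show "(\<lambda>P. P) \<in> measurable (PM Ps) (subprob_algebra borel)"
    unfolding PM_def
    by (intro measurable_restrict_space1 measurable_prob_algebraD measurable_ident_sets) simp
qed

lemma measurable_PM_slice:
  assumes Ps: "Ps \<in> sets (prob_algebra (borel :: 'a::topological_space measure))" and P: "P \<in> Ps"
    and F: "(\<lambda>(P, \<omega>). F P \<omega>) \<in> borel_measurable (PM Ps \<Otimes>\<^sub>M (borel :: 'a measure))"
  shows "F P \<in> borel_measurable P"
proof -
  have "(\<lambda>\<omega>. (\<lambda>(P, \<omega>). F P \<omega>) (P, \<omega>)) \<in> borel_measurable (borel :: 'a measure)"
    by (rule measurable_Pair2[OF F]) (simp add: space_PM[OF Ps] P)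
  then show ?thesis
    by (simp add: measurable_cong_sets[OF sets_PM[OF Ps P] refl])
qed

lemma conv_comb_measurable:
  assumes cw: "conv_weights Ps N lam"
    and f: "\<And>i. (\<lambda>(P, \<omega>). f i P \<omega>) \<in> borel_measurable (PM Ps \<Otimes>\<^sub>M (borel :: 'a::topological_space measure))"
  shows "(\<lambda>(P, \<omega>). (conv_comb N lam f n P \<omega> :: 'b::euclidean_space)) \<in> borel_measurable (PM Ps \<Otimes>\<^sub>M (borel :: 'a measure))"
proof -
  have N: "(\<lambda>x. N n (fst x)) \<in> measurable (PM Ps \<Otimes>\<^sub>M (borel :: 'a measure)) (count_space UNIV)"
    using cw unfolding conv_weights_def by (intro measurable_compose[OF measurable_fst]) auto
  have [measurable]: "(\<lambda>x. lam n i (fst x)) \<in> borel_measurable (PM Ps \<Otimes>\<^sub>M (borel :: 'a measure))" for i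
    using cw unfolding conv_weights_def by (intro measurable_compose[OF measurable_fst]) auto
  have [measurable]: "(\<lambda>x. f i (fst x) (snd x)) \<in> borel_measurable (PM Ps \<Otimes>\<^sub>M (borel :: 'a measure))" for i
    using f[of i] by (simp add: split_beta')
  have "(\<lambda>x. (\<lambda>k x. \<Sum>i=n..k. lam n i (fst x) *\<^sub>R f i (fst x) (snd x)) (N n (fst x)) x)
      \<in> borel_measurable (PM Ps \<Otimes>\<^sub>M (borel :: 'a measure))"
    by (rule measurable_compose_countable[OF _ N]) measurable
  then show ?thesis by (simp add: conv_comb_def split_beta')
qed

lemma conv_comb_in_convex_hull:
  assumes "conv_weights Ps N lam" "P \<in> Ps"
  shows "conv_comb N lam f n P \<omega> \<in> convex hull {f i P \<omega> | i. n \<le> i}"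
  unfolding conv_comb_def
proof (rule convex_sum)
  show "(\<Sum>i=n..N n P. lam n i P) = 1" "\<And>i. i \<in> {n..N n P} \<Longrightarrow> 0 \<le> lam n i P"
    using assms unfolding conv_weights_def by auto
  show "\<And>i. i \<in> {n..N n P} \<Longrightarrow> f i P \<omega> \<in> convex hull {f i P \<omega> | i. n \<le> i}"
    by (rule hull_inc) auto
qed auto

section \<open>Near-minimizers of the energy\<close>

definition L2_bound :: "(nat \<Rightarrow> nat \<Rightarrow> 'a measure \<Rightarrow> 'a \<Rightarrow> 'b::real_normed_vector) \<Rightarrow> nat \<Rightarrow> 'a measure \<Rightarrow> ennreal" where
  "L2_bound f m P = (SUP n. \<integral>\<^sup>+\<omega>. ennreal ((norm (f m n P \<omega>))\<^sup>2) \<partial>P)"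

definition energy_coeff :: "(nat \<Rightarrow> nat \<Rightarrow> 'a measure \<Rightarrow> 'a \<Rightarrow> 'b::real_normed_vector) \<Rightarrow> nat \<Rightarrow> 'a measure \<Rightarrow> real" where
  "energy_coeff f m P = 1 / (2 ^ m * (1 + enn2real (L2_bound f m P)))"

definition qcomb_L2 :: "(nat \<Rightarrow> nat \<Rightarrow> 'a measure \<Rightarrow> 'a \<Rightarrow> 'b::real_normed_vector) \<Rightarrow> nat \<Rightarrow> 'a measure \<Rightarrow> rat list \<Rightarrow> ennreal" where
  "qcomb_L2 f m P xs = (\<integral>\<^sup>+\<omega>. ennreal ((norm (qcomb xs (\<lambda>i. f m i P \<omega>)))\<^sup>2) \<partial>P)"

definition energy :: "(nat \<Rightarrow> nat \<Rightarrow> 'a measure \<Rightarrow> 'a \<Rightarrow> 'b::real_normed_vector) \<Rightarrow> 'a measure \<Rightarrow> rat list \<Rightarrow> ennreal" where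
  "energy f P xs = (\<Sum>m. ennreal (energy_coeff f m P) * qcomb_L2 f m P xs)"

definition min_energy :: "(nat \<Rightarrow> nat \<Rightarrow> 'a measure \<Rightarrow> 'a \<Rightarrow> 'b::real_normed_vector) \<Rightarrow> nat \<Rightarrow> 'a measure \<Rightarrow> ennreal" where
  "min_energy f n P = (INF xs\<in>Collect (qconvex n). energy f P xs)"

text \<open>Taking the least index in the enumeration \<open>from_nat\<close> of rational weight lists makes the
  choice of a near-minimizer measurable in \<open>P\<close>.\<close>
definition near_min :: "(nat \<Rightarrow> nat \<Rightarrow> 'a measure \<Rightarrow> 'a \<Rightarrow> 'b::real_normed_vector) \<Rightarrow> nat \<Rightarrow> 'a measure \<Rightarrow> rat list" where
  "near_min f n P = from_nat (LEAST k. qconvex n (from_nat k) \<and>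
     energy f P (from_nat k) \<le> min_energy f n P + ennreal (1 / (real n + 1)))"

lemma parallelogram_law_half:
  fixes x y :: "'b::real_inner"
  shows "(norm ((1/2) *\<^sub>R (x - y)))\<^sup>2 + (norm ((1/2) *\<^sub>R (x + y)))\<^sup>2 = ((norm x)\<^sup>2 + (norm y)\<^sup>2) / 2"
  by (simp add: power2_norm_eq_inner inner_add_left inner_add_right inner_diff_left inner_diff_right
      inner_commute[of y x] power_mult_distrib field_simps)

lemma near_minimizers_defect_small:
  fixes a \<psi> :: "nat \<Rightarrow> real"
  assumes inc: "incseq a" and bounded: "\<And>k. a k \<le> B"
    and near: "\<And>k. \<psi> k \<le> a k + 1 / (real k + 1)" and e: "e > 0"
  shows "\<exists>K. \<forall>k\<ge>K. \<forall>l\<ge>K. (\<psi> k + \<psi> l) / 2 - a (min k l) < e"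
proof -
  obtain \<alpha> where lim: "a \<longlonglongrightarrow> \<alpha>" and le: "\<And>k. a k \<le> \<alpha>"
    using incseq_convergent[OF inc, of B] bounded by blast
  obtain K1 where K1: "\<alpha> - e/2 < a K1"
    using order_tendstoD(1)[OF lim, of "\<alpha> - e/2"] e by (auto simp: eventually_sequentially)
  obtain K0 :: nat where K0: "2 / e < real K0"
    using reals_Archimedean2 by blast
  have small: "1 / (real k + 1) < e / 2" if "K0 \<le> k" for k
  proof -
    have "2 / e < real k + 1" using K0 that by linarith
    then show ?thesis using e by (simp add: field_simps)
  qed
  show ?thesis
  proof (intro exI allI impI)
    fix k l assume kl: "max K0 K1 \<le> k" "max K0 K1 \<le> l"
    then have "a K1 \<le> a (min k l)"
      using inc by (simp add: incseq_def)
    moreover have "1 / (real k + 1) < e / 2" "1 / (real l + 1) < e / 2"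
      using small[of k] small[of l] kl by simp_all
    ultimately have "\<psi> k < \<alpha> + e/2" "\<psi> l < \<alpha> + e/2" "\<alpha> - e/2 < a (min k l)"
      using near[of k] near[of l] le[of k] le[of l] K1 by linarith+
    then show "(\<psi> k + \<psi> l) / 2 - a (min k l) < e"
      by (simp add: field_simps)
  qed
qed

context
  fixes Ps :: "'a::topological_space measure set"
    and f :: "nat \<Rightarrow> nat \<Rightarrow> 'a measure \<Rightarrow> 'a \<Rightarrow> 'b::euclidean_space"
  assumes f_meas: "\<And>m n. (\<lambda>(P, \<omega>). f m n P \<omega>) \<in> borel_measurable (PM Ps \<Otimes>\<^sub>M borel)"
begin

lemma energy_measurable: "(\<lambda>P. energy f P xs) \<in> borel_measurable (PM Ps)"
proof -
  have [measurable]: "(\<lambda>x. f m n (fst x) (snd x)) \<in> borel_measurable (PM Ps \<Otimes>\<^sub>M borel)" for m n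
    using f_meas[of m n] by (simp add: split_beta')
  have [measurable]: "(\<lambda>P. L2_bound f m P) \<in> borel_measurable (PM Ps)" for m
    unfolding L2_bound_def by (intro borel_measurable_SUP nn_integral_measurable_PM) measurable
  have [measurable]: "(\<lambda>P. qcomb_L2 f m P xs) \<in> borel_measurable (PM Ps)" for m
    unfolding qcomb_L2_def qcomb_def by (rule nn_integral_measurable_PM) measurable
  show ?thesis
    unfolding energy_def energy_coeff_def by measurable
qed

lemma min_energy_measurable: "(\<lambda>P. min_energy f n P) \<in> borel_measurable (PM Ps)"
  unfolding min_energy_def using energy_measurable by (intro borel_measurable_INF) auto

lemma near_min_measurable: "(\<lambda>P. near_min f n P) \<in> measurable (PM Ps) (count_space UNIV)"
proof -
  note energy_measurable[measurable] min_energy_measurable[measurable]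
  have "(\<lambda>P. LEAST k. qconvex n (from_nat k) \<and>
      energy f P (from_nat k) \<le> min_energy f n P + ennreal (1 / (real n + 1)))
      \<in> measurable (PM Ps) (count_space UNIV)"
    by measurable
  then show ?thesis
    unfolding near_min_def by (rule measurable_compose) simp
qed

end

context
  fixes P :: "'a measure" and f :: "nat \<Rightarrow> nat \<Rightarrow> 'a measure \<Rightarrow> 'a \<Rightarrow> 'b::euclidean_space"
  assumes f_meas[measurable]: "\<And>m i. f m i P \<in> borel_measurable P"
    and L2_bound_finite: "\<And>m. L2_bound f m P < \<infinity>"
begin

lemma energy_coeff_pos: "energy_coeff f m P > 0"
  by (simp add: energy_coeff_def add_pos_nonneg)

lemma qcomb_measurable[measurable]: "(\<lambda>\<omega>. qcomb xs (\<lambda>i. f m i P \<omega>)) \<in> borel_measurable P"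
  unfolding qcomb_def by measurable

lemma qcomb_L2_le_L2_bound:
  assumes "qconvex n xs"
  shows "qcomb_L2 f m P xs \<le> L2_bound f m P"
proof -
  have "qcomb_L2 f m P xs \<le> (\<integral>\<^sup>+\<omega>. (\<Sum>i<length xs. ennreal (qweight xs i) * ennreal ((norm (f m i P \<omega>))\<^sup>2)) \<partial>P)"
    unfolding qcomb_L2_def
  proof (rule nn_integral_mono)
    fix \<omega>
    have "ennreal ((norm (qcomb xs (\<lambda>i. f m i P \<omega>)))\<^sup>2) \<le> ennreal (\<Sum>i<length xs. qweight xs i * (norm (f m i P \<omega>))\<^sup>2)"
      using norm_qcomb_sq_le[OF assms] by (rule ennreal_leI)
    then show "ennreal ((norm (qcomb xs (\<lambda>i. f m i P \<omega>)))\<^sup>2)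
        \<le> (\<Sum>i<length xs. ennreal (qweight xs i) * ennreal ((norm (f m i P \<omega>))\<^sup>2))"
      using qweight_nonneg[OF assms] by (simp add: sum_ennreal ennreal_mult[symmetric])
  qed
  also have "\<dots> = (\<Sum>i<length xs. ennreal (qweight xs i) * \<integral>\<^sup>+\<omega>. ennreal ((norm (f m i P \<omega>))\<^sup>2) \<partial>P)"
    by (simp add: nn_integral_sum nn_integral_cmult)
  also have "\<dots> \<le> (\<Sum>i<length xs. ennreal (qweight xs i) * L2_bound f m P)"
    unfolding L2_bound_def by (intro sum_mono mult_left_mono) (auto intro: SUP_upper)
  also have "\<dots> = L2_bound f m P"
    using qweight_nonneg[OF assms] sum_qweight[OF assms]
    by (simp add: sum_ennreal flip: sum_distrib_right)
  finally show ?thesis .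
qed

lemma energy_le_2:
  assumes "qconvex n xs"
  shows "energy f P xs \<le> 2"
proof -
  have "ennreal (energy_coeff f m P) * qcomb_L2 f m P xs \<le> ennreal ((1/2)^m)" for m
  proof -
    obtain s where s: "L2_bound f m P = ennreal s" "0 \<le> s"
      using L2_bound_finite[of m] by (cases "L2_bound f m P") auto
    have "energy_coeff f m P * s = (1/2)^m * (s / (1 + s))"
      using s by (simp add: energy_coeff_def power_divide)
    also have "\<dots> \<le> (1/2)^m * 1"
      using s by (intro mult_left_mono) auto
    finally have "ennreal (energy_coeff f m P * s) \<le> ennreal ((1/2)^m)"
      by (intro ennreal_leI) simp
    then have "ennreal (energy_coeff f m P) * L2_bound f m P \<le> ennreal ((1/2)^m)"
      using s energy_coeff_pos[of m] by (simp add: ennreal_mult)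
    then show ?thesis
      using qcomb_L2_le_L2_bound[OF assms] by (meson mult_left_mono order_trans zero_le)
  qed
  then have "energy f P xs \<le> (\<Sum>m. ennreal ((1/2::real)^m))"
    unfolding energy_def by (intro suminf_le) auto
  also have "\<dots> = ennreal 2"
    by (rule suminf_ennreal_eq) (use geometric_sums[of "1/2::real"] in auto)
  finally show ?thesis by simp
qed

lemma min_energy_le_energy: "qconvex n xs \<Longrightarrow> min_energy f n P \<le> energy f P xs"
  unfolding min_energy_def by (rule INF_lower) simp

lemma min_energy_le_2: "min_energy f n P \<le> 2"
  using min_energy_le_energy[OF qconvex_unit] energy_le_2[OF qconvex_unit] by (rule order_trans)

lemma min_energy_mono: "n \<le> n' \<Longrightarrow> min_energy f n P \<le> min_energy f n' P"
  unfolding min_energy_def by (rule INF_superset_mono) (auto simp: qconvex_def)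

lemma near_min:
  "qconvex n (near_min f n P) \<and> energy f P (near_min f n P) \<le> min_energy f n P + ennreal (1 / (real n + 1))"
proof -
  have "min_energy f n P < min_energy f n P + ennreal (1 / (real n + 1))"
    using min_energy_le_2[of n] by (cases "min_energy f n P") (auto simp: top_unique)
  then obtain xs where "qconvex n xs" "energy f P xs < min_energy f n P + ennreal (1 / (real n + 1))"
    unfolding min_energy_def[of f n P] by (auto simp: INF_less_iff)
  then have "\<exists>k. qconvex n (from_nat k) \<and> energy f P (from_nat k) \<le> min_energy f n P + ennreal (1 / (real n + 1))"
    by (intro exI[of _ "to_nat xs"]) simp
  then show ?thesis
    unfolding near_min_def by (rule LeastI_ex)
qed

lemma energy_qmid:
  "(\<Sum>m. ennreal (energy_coeff f m P) *
      (\<integral>\<^sup>+\<omega>. ennreal ((norm ((1/2) *\<^sub>R (qcomb xs (\<lambda>i. f m i P \<omega>) - qcomb ys (\<lambda>i. f m i P \<omega>))))\<^sup>2) \<partial>P))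
    + energy f P (qmid xs ys) = ennreal (1/2) * (energy f P xs + energy f P ys)"
proof -
  define D where "D m = (\<integral>\<^sup>+\<omega>. ennreal ((norm ((1/2) *\<^sub>R (qcomb xs (\<lambda>i. f m i P \<omega>) - qcomb ys (\<lambda>i. f m i P \<omega>))))\<^sup>2) \<partial>P)" for m
  have pointwise: "ennreal ((norm ((1/2) *\<^sub>R (x - y)))\<^sup>2) + ennreal ((norm ((1/2) *\<^sub>R (x + y)))\<^sup>2)
      = ennreal (1/2) * (ennreal ((norm x)\<^sup>2) + ennreal ((norm y)\<^sup>2))" for x y :: 'b
  proof -
    have "ennreal ((norm ((1/2) *\<^sub>R (x - y)))\<^sup>2) + ennreal ((norm ((1/2) *\<^sub>R (x + y)))\<^sup>2)
        = ennreal ((norm ((1/2) *\<^sub>R (x - y)))\<^sup>2 + (norm ((1/2) *\<^sub>R (x + y)))\<^sup>2)"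
      by (rule ennreal_plus[symmetric]) auto
    also have "\<dots> = ennreal (1/2 * ((norm x)\<^sup>2 + (norm y)\<^sup>2))"
      by (subst parallelogram_law_half) simp
    also have "\<dots> = ennreal (1/2) * ennreal ((norm x)\<^sup>2 + (norm y)\<^sup>2)"
      by (rule ennreal_mult) auto
    finally show ?thesis
      by simp
  qed
  have parallelogram: "D m + qcomb_L2 f m P (qmid xs ys) = ennreal (1/2) * (qcomb_L2 f m P xs + qcomb_L2 f m P ys)" for m
  proof -
    have "D m + qcomb_L2 f m P (qmid xs ys)
        = (\<integral>\<^sup>+\<omega>. ennreal ((norm ((1/2) *\<^sub>R (qcomb xs (\<lambda>i. f m i P \<omega>) - qcomb ys (\<lambda>i. f m i P \<omega>))))\<^sup>2)
            + ennreal ((norm ((1/2) *\<^sub>R (qcomb xs (\<lambda>i. f m i P \<omega>) + qcomb ys (\<lambda>i. f m i P \<omega>))))\<^sup>2) \<partial>P)"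
      unfolding D_def qcomb_L2_def qcomb_qmid by (rule nn_integral_add[symmetric]) measurable
    also have "\<dots> = (\<integral>\<^sup>+\<omega>. ennreal (1/2) * (ennreal ((norm (qcomb xs (\<lambda>i. f m i P \<omega>)))\<^sup>2) + ennreal ((norm (qcomb ys (\<lambda>i. f m i P \<omega>)))\<^sup>2)) \<partial>P)"
      by (simp only: pointwise)
    also have "\<dots> = ennreal (1/2) * (qcomb_L2 f m P xs + qcomb_L2 f m P ys)"
      unfolding qcomb_L2_def by (simp add: nn_integral_cmult nn_integral_add)
    finally show ?thesis .
  qed
  have "(\<Sum>m. ennreal (energy_coeff f m P) * D m) + energy f P (qmid xs ys)
      = (\<Sum>m. ennreal (energy_coeff f m P) * (D m + qcomb_L2 f m P (qmid xs ys)))"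
    unfolding energy_def by (simp add: distrib_left suminf_add)
  also have "\<dots> = (\<Sum>m. ennreal (1/2) * (ennreal (energy_coeff f m P) * qcomb_L2 f m P xs
      + ennreal (energy_coeff f m P) * qcomb_L2 f m P ys))"
    by (simp add: parallelogram distrib_left mult_ac)
  also have "\<dots> = ennreal (1/2) * (energy f P xs + energy f P ys)"
    unfolding energy_def by (simp add: ennreal_suminf_cmult suminf_add)
  finally show ?thesis
    by (simp add: D_def)
qed

lemma L2_dist_qcomb_le:
  assumes xs: "qconvex k xs" and ys: "qconvex l ys"
  shows "(\<integral>\<^sup>+\<omega>. ennreal (norm (qcomb xs (\<lambda>i. f m i P \<omega>) - qcomb ys (\<lambda>i. f m i P \<omega>)) powr 2) \<partial>P)
    \<le> ennreal (4 / energy_coeff f m P * ((enn2real (energy f P xs) + enn2real (energy f P ys)) / 2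
         - enn2real (min_energy f (min k l) P)))"
proof -
  define X where "X \<omega> = qcomb xs (\<lambda>i. f m i P \<omega>)" for \<omega>
  define Y where "Y \<omega> = qcomb ys (\<lambda>i. f m i P \<omega>)" for \<omega>
  define D where "D = (\<integral>\<^sup>+\<omega>. ennreal ((norm ((1/2) *\<^sub>R (X \<omega> - Y \<omega>)))\<^sup>2) \<partial>P)"
  define c where "c = energy_coeff f m P"
  define E1 E2 a where "E1 = enn2real (energy f P xs)" and "E2 = enn2real (energy f P ys)"
    and "a = enn2real (min_energy f (min k l) P)"
  have c: "c > 0" by (simp add: c_def energy_coeff_pos)
  have finite_eq: "x \<le> 2 \<Longrightarrow> x = ennreal (enn2real x)" for x :: ennreal
    by (cases x) (auto simp: top_unique)
  have "ennreal c * D \<le> (\<Sum>m. ennreal (energy_coeff f m P) *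
      (\<integral>\<^sup>+\<omega>. ennreal ((norm ((1/2) *\<^sub>R (qcomb xs (\<lambda>i. f m i P \<omega>) - qcomb ys (\<lambda>i. f m i P \<omega>))))\<^sup>2) \<partial>P))"
    unfolding c_def D_def X_def Y_def using sum_le_suminf[OF summableI, of "{m}"] by simp
  moreover have "min_energy f (min k l) P \<le> energy f P (qmid xs ys)"
    by (rule min_energy_le_energy[OF qconvex_qmid[OF xs ys]])
  ultimately have "ennreal c * D + min_energy f (min k l) P \<le> ennreal (1/2) * (energy f P xs + energy f P ys)"
    unfolding energy_qmid[symmetric] by (rule add_mono)
  also have "\<dots> = ennreal (1/2) * ennreal (E1 + E2)"
    using energy_le_2[OF xs] energy_le_2[OF ys] finite_eq unfolding E1_def E2_def
    by (metis enn2real_nonneg ennreal_plus)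
  also have "\<dots> = ennreal ((E1 + E2) / 2)"
    by (subst ennreal_mult[symmetric]) (auto simp: E1_def E2_def)
  finally have ineq: "ennreal c * D + ennreal a \<le> ennreal ((E1 + E2) / 2)"
    using min_energy_le_2 finite_eq unfolding a_def by metis
  obtain d where d: "D = ennreal d" "0 \<le> d"
  proof (cases D)
    case top
    with ineq c show ?thesis by (simp add: ennreal_mult_top top_unique)
  qed
  have "c * d + a \<le> (E1 + E2) / 2"
    using ineq c d by (simp add: a_def E1_def E2_def ennreal_mult[symmetric] flip: ennreal_plus)
  then have bound: "4 * d \<le> 4 / c * ((E1 + E2) / 2 - a)"
    using c by (simp add: field_simps)
  have pointwise: "ennreal (norm v powr 2) = ennreal 4 * ennreal ((norm ((1/2) *\<^sub>R v))\<^sup>2)" for v :: 'b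
  proof -
    have "norm v powr 2 = 4 * (norm ((1/2) *\<^sub>R v))\<^sup>2"
      by (simp add: powr_numeral power_divide)
    then show ?thesis
      by (subst ennreal_mult[symmetric]) auto
  qed
  have "(\<integral>\<^sup>+\<omega>. ennreal (norm (X \<omega> - Y \<omega>) powr 2) \<partial>P) = ennreal 4 * D"
    unfolding D_def pointwise by (rule nn_integral_cmult) (simp add: X_def Y_def)
  also have "\<dots> = ennreal (4 * d)"
    using d by (simp add: ennreal_mult)
  also have "\<dots> \<le> ennreal (4 / c * ((E1 + E2) / 2 - a))"
    using bound by (rule ennreal_leI)
  finally show ?thesis
    by (simp add: X_def Y_def E1_def E2_def a_def c_def)
qed

lemma Lp_cauchy_near_min: "Lp_cauchy 2 P (\<lambda>n \<omega>. qcomb (near_min f n P) (\<lambda>i. f m i P \<omega>))"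
  unfolding Lp_cauchy_def
proof (intro allI impI)
  fix e :: real assume e: "e > 0"
  define a where "a k = enn2real (min_energy f k P)" for k
  define \<psi> where "\<psi> k = enn2real (energy f P (near_min f k P))" for k
  define c where "c = energy_coeff f m P"
  have c: "c > 0" by (simp add: c_def energy_coeff_pos)
  have finite: "min_energy f k P < \<top>" for k
    by (rule order_le_less_trans[OF min_energy_le_2]) simp
  have inc: "incseq a"
    unfolding a_def incseq_def using finite by (auto intro!: enn2real_mono min_energy_mono)
  have bounded: "a k \<le> 2" for k
    using enn2real_mono[OF min_energy_le_2[of k]] unfolding a_def by simp
  have near: "\<psi> k \<le> a k + 1 / (real k + 1)" for k
  proof -
    have "\<psi> k \<le> enn2real (min_energy f k P + ennreal (1 / (real k + 1)))"
      unfolding \<psi>_def using near_min[of k] finite[of k] by (intro enn2real_mono) auto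
    also have "\<dots> = a k + 1 / (real k + 1)"
      unfolding a_def using finite[of k] by (subst enn2real_plus) auto
    finally show ?thesis .
  qed
  obtain K where K: "\<And>k l. K \<le> k \<Longrightarrow> K \<le> l \<Longrightarrow> (\<psi> k + \<psi> l) / 2 - a (min k l) < e * c / 4"
    using near_minimizers_defect_small[OF inc bounded near, of "e * c / 4"] e c by auto
  show "\<exists>N. \<forall>k\<ge>N. \<forall>l\<ge>N. (\<integral>\<^sup>+\<omega>. ennreal (norm (qcomb (near_min f k P) (\<lambda>i. f m i P \<omega>)
      - qcomb (near_min f l P) (\<lambda>i. f m i P \<omega>)) powr 2) \<partial>P) < ennreal e"
  proof (intro exI allI impI)
    fix k l assume kl: "K \<le> k" "K \<le> l"
    have "4 / c * ((\<psi> k + \<psi> l) / 2 - a (min k l)) < e"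
      using K[OF kl] c by (simp add: field_simps)
    then have "ennreal (4 / c * ((\<psi> k + \<psi> l) / 2 - a (min k l))) < ennreal e"
      using e by (intro ennreal_lessI)
    with L2_dist_qcomb_le[OF conjunct1[OF near_min] conjunct1[OF near_min], where m = m]
    show "(\<integral>\<^sup>+\<omega>. ennreal (norm (qcomb (near_min f k P) (\<lambda>i. f m i P \<omega>)
      - qcomb (near_min f l P) (\<lambda>i. f m i P \<omega>)) powr 2) \<partial>P) < ennreal e"
      unfolding a_def \<psi>_def c_def by (rule order.strict_trans1)
  qed
qed

end

context
  fixes Ps :: "'a::topological_space measure set"
    and f :: "nat \<Rightarrow> nat \<Rightarrow> 'a measure \<Rightarrow> 'a \<Rightarrow> 'b::euclidean_space"
  assumes Ps: "Ps \<in> sets (prob_algebra borel)"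
    and f_meas: "\<And>m n. (\<lambda>(P, \<omega>). f m n P \<omega>) \<in> borel_measurable (PM Ps \<Otimes>\<^sub>M borel)"
    and L2_bounded: "\<And>m P. P \<in> Ps \<Longrightarrow> L2_bound f m P < \<infinity>"
begin

lemma qconvex_near_min: "P \<in> Ps \<Longrightarrow> qconvex n (near_min f n P)"
  using near_min[OF measurable_PM_slice[OF Ps _ f_meas] L2_bounded] by blast

lemma conv_weights_near_min:
  "conv_weights Ps (\<lambda>n P. length (near_min f n P) - 1) (\<lambda>n i P. qweight (near_min f n P) i)"
  unfolding conv_weights_def
proof (intro conjI allI ballI)
  fix n i
  show "(\<lambda>P. length (near_min f n P) - 1) \<in> measurable (PM Ps) (count_space UNIV)"
    "(\<lambda>P. qweight (near_min f n P) i) \<in> borel_measurable (PM Ps)"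
    by (auto intro: measurable_compose[OF near_min_measurable[OF f_meas]])
next
  fix n P assume "P \<in> Ps"
  then have xs: "qconvex n (near_min f n P)" by (rule qconvex_near_min)
  show "n \<le> length (near_min f n P) - 1"
    using xs by (auto simp: qconvex_def)
  show "0 \<le> qweight (near_min f n P) i" "qweight (near_min f n P) i \<le> 1" for i
    using xs by (rule qweight_nonneg, rule qweight_le_1)
  show "i \<notin> {n..length (near_min f n P) - 1} \<longrightarrow> qweight (near_min f n P) i = 0" for i
    using xs by (auto intro: qweight_eq_0 simp: qconvex_def)
  have "(\<Sum>i=n..length (near_min f n P) - 1. qweight (near_min f n P) i)
      = (\<Sum>i<length (near_min f n P). qweight (near_min f n P) i)"
    using xs by (intro sum.mono_neutral_left) (auto simp: qweight_eq_0 qconvex_def)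
  then show "(\<Sum>i=n..length (near_min f n P) - 1. qweight (near_min f n P) i) = 1"
    by (simp add: sum_qweight[OF xs])
qed

lemma conv_comb_near_min:
  assumes "P \<in> Ps"
  shows "conv_comb (\<lambda>n P. length (near_min f n P) - 1) (\<lambda>n i P. qweight (near_min f n P) i) (f m) n P
    = (\<lambda>\<omega>. qcomb (near_min f n P) (\<lambda>i. f m i P \<omega>))"
proof
  fix \<omega>
  have xs: "qconvex n (near_min f n P)" using assms by (rule qconvex_near_min)
  then show "conv_comb (\<lambda>n P. length (near_min f n P) - 1) (\<lambda>n i P. qweight (near_min f n P) i) (f m) n P \<omega>
    = qcomb (near_min f n P) (\<lambda>i. f m i P \<omega>)"
    unfolding conv_comb_def qcomb_def
    by (intro sum.mono_neutral_left) (auto simp: qweight_eq_0 qconvex_def)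
qed

lemma Lp_convergent_near_min:
  assumes "P \<in> Ps"
  shows "Lp_convergent 2 P (\<lambda>n \<omega>. qcomb (near_min f n P) (\<lambda>i. f m i P \<omega>))"
proof (rule Lp_cauchy_imp_Lp_convergent)
  note slice = measurable_PM_slice[OF Ps assms f_meas]
  show "(\<lambda>\<omega>. qcomb (near_min f n P) (\<lambda>i. f m i P \<omega>)) \<in> borel_measurable P" for n
    by (rule qcomb_measurable[OF slice L2_bounded[OF assms]])
  show "(\<integral>\<^sup>+\<omega>. ennreal (norm (qcomb (near_min f n P) (\<lambda>i. f m i P \<omega>)) powr 2) \<partial>P) < \<infinity>" for n
    using order_le_less_trans[OF qcomb_L2_le_L2_bound[OF slice L2_bounded[OF assms] qconvex_near_min[OF assms]]
        L2_bounded[OF assms]]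
    by (simp add: qcomb_L2_def powr_numeral)
  show "Lp_cauchy 2 P (\<lambda>n \<omega>. qcomb (near_min f n P) (\<lambda>i. f m i P \<omega>))"
    by (rule Lp_cauchy_near_min[OF slice L2_bounded[OF assms]])
qed simp

lemma convex_combinations_L2_convergent:
  "\<exists>N lam. conv_weights Ps N lam \<and> (\<forall>m. \<forall>P\<in>Ps. Lp_convergent 2 P (\<lambda>n. conv_comb N lam (f m) n P))"
proof (intro exI conjI allI ballI)
  show "conv_weights Ps (\<lambda>n P. length (near_min f n P) - 1) (\<lambda>n i P. qweight (near_min f n P) i)"
    by (rule conv_weights_near_min)
  fix m P assume "P \<in> Ps"
  then show "Lp_convergent 2 P (\<lambda>n. conv_comb (\<lambda>n P. length (near_min f n P) - 1)
      (\<lambda>n i P. qweight (near_min f n P) i) (f m) n P)"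
    by (simp only: conv_comb_near_min Lp_convergent_near_min)
qed

end

section \<open>Uniformly integrable families\<close>

definition trunc_norm :: "real \<Rightarrow> 'b::real_normed_vector \<Rightarrow> 'b" where
  "trunc_norm r x = (if norm x \<le> r then x else 0)"

lemma borel_measurable_trunc_norm[measurable]:
  fixes g :: "'a \<Rightarrow> 'b::{real_normed_vector, second_countable_topology}"
  assumes [measurable]: "g \<in> borel_measurable M"
  shows "(\<lambda>x. trunc_norm r (g x)) \<in> borel_measurable M"
  unfolding trunc_norm_def by measurable

lemma L2_bound_trunc_norm:
  assumes "prob_space P"
  shows "L2_bound (\<lambda>m n P \<omega>. trunc_norm (real m) (f n P \<omega>)) m P \<le> ennreal ((real m)\<^sup>2)"
  unfolding L2_bound_def
proof (rule SUP_least)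
  fix n
  have "(\<integral>\<^sup>+\<omega>. ennreal ((norm (trunc_norm (real m) (f n P \<omega>)))\<^sup>2) \<partial>P) \<le> (\<integral>\<^sup>+\<omega>. ennreal ((real m)\<^sup>2) \<partial>P)"
    by (intro nn_integral_mono ennreal_leI power_mono) (auto simp: trunc_norm_def)
  also have "\<dots> = ennreal ((real m)\<^sup>2)"
    using assms by (simp add: prob_space.emeasure_space_1)
  finally show "(\<integral>\<^sup>+\<omega>. ennreal ((norm (trunc_norm (real m) (f n P \<omega>)))\<^sup>2) \<partial>P) \<le> ennreal ((real m)\<^sup>2)" .
qed

lemma nn_integral_norm_conv_comb_le:
  fixes u :: "nat \<Rightarrow> 'a::topological_space measure \<Rightarrow> 'a \<Rightarrow> 'b::{real_normed_vector, second_countable_topology}"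
  assumes cw: "conv_weights Ps N lam" and P: "P \<in> Ps" and [measurable]: "\<And>i. u i P \<in> borel_measurable P"
  shows "(\<integral>\<^sup>+\<omega>. ennreal (norm (conv_comb N lam u n P \<omega>)) \<partial>P)
    \<le> (\<Sum>i=n..N n P. ennreal (lam n i P) * (\<integral>\<^sup>+\<omega>. ennreal (norm (u i P \<omega>)) \<partial>P))"
proof -
  have lam: "0 \<le> lam n i P" for i
    using cw P unfolding conv_weights_def by blast
  have "(\<integral>\<^sup>+\<omega>. ennreal (norm (conv_comb N lam u n P \<omega>)) \<partial>P)
      \<le> (\<integral>\<^sup>+\<omega>. (\<Sum>i=n..N n P. ennreal (lam n i P) * ennreal (norm (u i P \<omega>))) \<partial>P)"
  proof (rule nn_integral_mono)
    fix \<omega>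
    have "norm (conv_comb N lam u n P \<omega>) \<le> (\<Sum>i=n..N n P. lam n i P * norm (u i P \<omega>))"
      unfolding conv_comb_def using lam by (intro order_trans[OF norm_sum]) (simp add: abs_of_nonneg)
    then show "ennreal (norm (conv_comb N lam u n P \<omega>)) \<le> (\<Sum>i=n..N n P. ennreal (lam n i P) * ennreal (norm (u i P \<omega>)))"
      using lam by (simp add: ennreal_leI sum_ennreal ennreal_mult[symmetric])
  qed
  also have "\<dots> = (\<Sum>i=n..N n P. ennreal (lam n i P) * (\<integral>\<^sup>+\<omega>. ennreal (norm (u i P \<omega>)) \<partial>P))"
    by (simp add: nn_integral_sum nn_integral_cmult)
  finally show ?thesis .
qed

lemma nn_integral_norm_conv_comb_trunc_le:
  fixes f :: "nat \<Rightarrow> 'a::topological_space measure \<Rightarrow> 'a \<Rightarrow> 'b::{real_normed_vector, second_countable_topology}"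
  assumes cw: "conv_weights Ps N lam" and P: "P \<in> Ps" and [measurable]: "\<And>i. f i P \<in> borel_measurable P"
  shows "(\<integral>\<^sup>+\<omega>. ennreal (norm (conv_comb N lam f n P \<omega> - conv_comb N lam (\<lambda>i P \<omega>. trunc_norm r (f i P \<omega>)) n P \<omega>)) \<partial>P)
    \<le> (SUP i. \<integral>\<^sup>+\<omega>. indicator {x. r < norm (f i P x)} \<omega> * ennreal (norm (f i P \<omega>)) \<partial>P)"
    (is "_ \<le> ?T")
proof -
  have tail: "(\<integral>\<^sup>+\<omega>. ennreal (norm (f i P \<omega> - trunc_norm r (f i P \<omega>))) \<partial>P) \<le> ?T" for i
  proof -
    have "(\<integral>\<^sup>+\<omega>. ennreal (norm (f i P \<omega> - trunc_norm r (f i P \<omega>))) \<partial>P)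
        = (\<integral>\<^sup>+\<omega>. indicator {x. r < norm (f i P x)} \<omega> * ennreal (norm (f i P \<omega>)) \<partial>P)"
      by (intro nn_integral_cong) (simp add: trunc_norm_def indicator_def)
    also have "\<dots> \<le> ?T" by (rule SUP_upper) simp
    finally show ?thesis .
  qed
  have "(\<integral>\<^sup>+\<omega>. ennreal (norm (conv_comb N lam f n P \<omega> - conv_comb N lam (\<lambda>i P \<omega>. trunc_norm r (f i P \<omega>)) n P \<omega>)) \<partial>P)
      = (\<integral>\<^sup>+\<omega>. ennreal (norm (conv_comb N lam (\<lambda>i P \<omega>. f i P \<omega> - trunc_norm r (f i P \<omega>)) n P \<omega>)) \<partial>P)"
    by (simp add: conv_comb_def sum_subtractf scaleR_diff_right)
  also have "\<dots> \<le> (\<Sum>i=n..N n P. ennreal (lam n i P) * ?T)"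
    by (rule order_trans[OF nn_integral_norm_conv_comb_le[OF cw P]])
      (auto intro!: sum_mono mult_left_mono tail)
  also have "\<dots> = ?T"
    using cw P unfolding conv_weights_def by (simp add: sum_ennreal flip: sum_distrib_right)
  finally show ?thesis .
qed

lemma convex_combinations_L1_convergent:
  fixes Ps :: "'a::topological_space measure set"
    and f :: "nat \<Rightarrow> 'a measure \<Rightarrow> 'a \<Rightarrow> 'b::euclidean_space"
  assumes Ps: "Ps \<in> sets (prob_algebra borel)"
    and f_meas: "\<And>n. (\<lambda>(P, \<omega>). f n P \<omega>) \<in> borel_measurable (PM Ps \<Otimes>\<^sub>M borel)"
    and ui: "\<And>P. P \<in> Ps \<Longrightarrow> unif_integrable P (\<lambda>n. f n P)"
  shows "\<exists>N lam. conv_weights Ps N lam \<and> (\<forall>P\<in>Ps. Lp_convergent 1 P (\<lambda>n. conv_comb N lam f n P))"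
proof -
  define ft where "ft m n P \<omega> = trunc_norm (real m) (f n P \<omega>)" for m n P \<omega>
  have [measurable]: "(\<lambda>x. f n (fst x) (snd x)) \<in> borel_measurable (PM Ps \<Otimes>\<^sub>M borel)" for n
    using f_meas[of n] by (simp add: split_beta')
  have ft_meas: "(\<lambda>(P, \<omega>). ft m n P \<omega>) \<in> borel_measurable (PM Ps \<Otimes>\<^sub>M borel)" for m n
    unfolding ft_def split_beta' by measurable
  have "L2_bound ft m P < \<infinity>" if "P \<in> Ps" for m P
    unfolding ft_def
    by (rule order_le_less_trans[OF L2_bound_trunc_norm[OF prob_space_PM[OF Ps that], where f = f]]) simp
  then obtain N lam where cw: "conv_weights Ps N lam"
    and L2: "\<And>m P. P \<in> Ps \<Longrightarrow> Lp_convergent 2 P (\<lambda>n. conv_comb N lam (ft m) n P)"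
    using convex_combinations_L2_convergent[where f = ft, OF Ps ft_meas] by blast
  have "Lp_convergent 1 P (\<lambda>n. conv_comb N lam f n P)" if P: "P \<in> Ps" for P
  proof (rule Lp_cauchy_imp_Lp_convergent)
    have prob: "prob_space P" by (rule prob_space_PM[OF Ps P])
    note f_slice[measurable] = measurable_PM_slice[OF Ps P f_meas]
    have g_meas[measurable]: "conv_comb N lam u n P \<in> borel_measurable P"
      if "\<And>i. (\<lambda>(P, \<omega>). u i P \<omega>) \<in> borel_measurable (PM Ps \<Otimes>\<^sub>M borel)" for u :: "nat \<Rightarrow> 'a measure \<Rightarrow> 'a \<Rightarrow> 'b" and n
      by (rule measurable_PM_slice[OF Ps P conv_comb_measurable[OF cw that]])
    show "conv_comb N lam f n P \<in> borel_measurable P" for n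
      using f_meas by (rule g_meas)
    show "(\<integral>\<^sup>+\<omega>. ennreal (norm (conv_comb N lam f n P \<omega>) powr 1) \<partial>P) < \<infinity>" for n
    proof -
      have f_integrable: "(\<integral>\<^sup>+\<omega>. ennreal (norm (f i P \<omega>)) \<partial>P) < \<infinity>" for i
        using ui[OF P] unfolding unif_integrable_def integrable_iff_bounded by blast
      have "(\<integral>\<^sup>+\<omega>. ennreal (norm (conv_comb N lam f n P \<omega>)) \<partial>P)
          \<le> (\<Sum>i=n..N n P. ennreal (lam n i P) * (\<integral>\<^sup>+\<omega>. ennreal (norm (f i P \<omega>)) \<partial>P))"
        by (rule nn_integral_norm_conv_comb_le[where u = f, OF cw P f_slice])
      also have "\<dots> < \<infinity>"
        using f_integrable by (simp add: ennreal_mult_less_top less_top)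
      finally show ?thesis by simp
    qed
    show "Lp_cauchy 1 P (\<lambda>n. conv_comb N lam f n P)"
    proof (rule Lp_cauchy_1_if_L2_approximable[OF prob, where h = "\<lambda>m n. conv_comb N lam (ft m) n P"])
      show "conv_comb N lam f n P \<in> borel_measurable P" "conv_comb N lam (ft m) n P \<in> borel_measurable P" for m n
        by (rule g_meas, rule f_meas, rule g_meas, rule ft_meas)
      show "Lp_cauchy 2 P (\<lambda>n. conv_comb N lam (ft m) n P)" for m
        using ft_meas by (intro Lp_convergent_imp_Lp_cauchy L2[OF P] g_meas) auto
      fix e :: real assume "e > 0"
      define T where "T K = (SUP n. \<integral>\<^sup>+\<omega>. indicator {x. K < norm (f n P x)} \<omega> * ennreal (norm (f n P \<omega>)) \<partial>P)"
        for K :: real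
      have T_lim: "(\<lambda>m. T (real m)) \<longlonglongrightarrow> 0"
        using ui[OF P] unfolding unif_integrable_def T_def
        by (intro filterlim_compose[OF _ filterlim_real_sequentially]) blast
      obtain m where "T (real m) < ennreal e"
        using order_tendstoD(2)[OF T_lim, of "ennreal e"] \<open>e > 0\<close> by (auto simp: eventually_sequentially)
      then show "\<exists>m. \<forall>n. (\<integral>\<^sup>+\<omega>. ennreal (norm (conv_comb N lam f n P \<omega> - conv_comb N lam (ft m) n P \<omega>)) \<partial>P) \<le> ennreal e"
        using nn_integral_norm_conv_comb_trunc_le[where f = f and r = "real m", OF cw P f_slice]
        unfolding ft_def T_def by (blast intro: order_trans less_imp_le)
    qed
  qed simp
  with cw show ?thesis by blast
qed

theorem proposition3p3:
  fixes Ps :: "('a::{metric_space, second_countable_topology}) measure set"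
  assumes Ps_meas: "Ps \<in> sets (prob_algebra (borel :: 'a measure))"
  shows
  \<comment> \<open>(i)\<close>
  "(\<forall>f :: nat \<Rightarrow> 'a measure \<Rightarrow> 'a \<Rightarrow> 'b::euclidean_space.
      (\<forall>n. (\<lambda>(P, \<omega>). f n P \<omega>) \<in> borel_measurable (PM Ps \<Otimes>\<^sub>M (borel :: 'a measure))) \<and>
      (\<forall>P\<in>Ps. (SUP n. \<integral>\<^sup>+\<omega>. ennreal ((norm (f n P \<omega>))\<^sup>2) \<partial>P) < \<infinity>)
      \<longrightarrow> (\<exists>N lam. conv_weights Ps N lam \<and>
            (\<forall>n. (\<lambda>(P, \<omega>). conv_comb N lam f n P \<omega>) \<in> borel_measurable (PM Ps \<Otimes>\<^sub>M (borel :: 'a measure))) \<and>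
            (\<forall>n. \<forall>P\<in>Ps. \<forall>\<omega>. conv_comb N lam f n P \<omega> \<in> convex hull {f i P \<omega> | i. n \<le> i}) \<and>
            (\<forall>P\<in>Ps. Lp_convergent 2 P (\<lambda>n. conv_comb N lam f n P))))
   \<and>
  \<comment> \<open>(ii)\<close>
   (\<forall>f :: nat \<Rightarrow> nat \<Rightarrow> 'a measure \<Rightarrow> 'a \<Rightarrow> 'b::euclidean_space.
      (\<forall>m n. (\<lambda>(P, \<omega>). f m n P \<omega>) \<in> borel_measurable (PM Ps \<Otimes>\<^sub>M (borel :: 'a measure))) \<and>
      (\<forall>m. \<forall>P\<in>Ps. (SUP n. \<integral>\<^sup>+\<omega>. ennreal ((norm (f m n P \<omega>))\<^sup>2) \<partial>P) < \<infinity>)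
      \<longrightarrow> (\<exists>N lam. conv_weights Ps N lam \<and>
            (\<forall>m n. (\<lambda>(P, \<omega>). conv_comb N lam (f m) n P \<omega>) \<in> borel_measurable (PM Ps \<Otimes>\<^sub>M (borel :: 'a measure))) \<and>
            (\<forall>m n. \<forall>P\<in>Ps. \<forall>\<omega>. conv_comb N lam (f m) n P \<omega> \<in> convex hull {f m i P \<omega> | i. n \<le> i}) \<and>
            (\<forall>m. \<forall>P\<in>Ps. Lp_convergent 2 P (\<lambda>n. conv_comb N lam (f m) n P))))
   \<and>
  \<comment> \<open>(iii)\<close>
   (\<forall>f :: nat \<Rightarrow> 'a measure \<Rightarrow> 'a \<Rightarrow> 'b::euclidean_space.
      (\<forall>n. (\<lambda>(P, \<omega>). f n P \<omega>) \<in> borel_measurable (PM Ps \<Otimes>\<^sub>M (borel :: 'a measure))) \<and>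
      (\<forall>P\<in>Ps. unif_integrable P (\<lambda>n. f n P))
      \<longrightarrow> (\<exists>N lam. conv_weights Ps N lam \<and>
            (\<forall>n. (\<lambda>(P, \<omega>). conv_comb N lam f n P \<omega>) \<in> borel_measurable (PM Ps \<Otimes>\<^sub>M (borel :: 'a measure))) \<and>
            (\<forall>n. \<forall>P\<in>Ps. \<forall>\<omega>. conv_comb N lam f n P \<omega> \<in> convex hull {f i P \<omega> | i. n \<le> i}) \<and>
            (\<forall>P\<in>Ps. Lp_convergent 1 P (\<lambda>n. conv_comb N lam f n P))))"
proof (intro conjI allI impI, goal_cases)
  case (1 f)
  then obtain N lam where "conv_weights Ps N lam" "\<forall>P\<in>Ps. Lp_convergent 2 P (\<lambda>n. conv_comb N lam f n P)"
    using convex_combinations_L2_convergent[where f = "\<lambda>_. f", OF Ps_meas] by (auto simp: L2_bound_def)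
  with 1 show ?case
    by (blast intro: conv_comb_measurable conv_comb_in_convex_hull)
next
  case (2 f)
  then obtain N lam where "conv_weights Ps N lam" "\<forall>m. \<forall>P\<in>Ps. Lp_convergent 2 P (\<lambda>n. conv_comb N lam (f m) n P)"
    using convex_combinations_L2_convergent[where f = f, OF Ps_meas] by (auto simp: L2_bound_def)
  with 2 show ?case
    by (blast intro: conv_comb_measurable conv_comb_in_convex_hull)
next
  case (3 f)
  then obtain N lam where "conv_weights Ps N lam" "\<forall>P\<in>Ps. Lp_convergent 1 P (\<lambda>n. conv_comb N lam f n P)"
    using convex_combinations_L1_convergent[where f = f, OF Ps_meas] by auto
  with 3 show ?case
    by (blast intro: conv_comb_measurable conv_comb_in_convex_hull)
qed

end
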